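(* Consider $N$ robots; robot $i$ has joint vector $q_i(t)\in\mathbb{R}^{n_i}$, end-effector configuration $x_i=x_i(q_i)\in\mathbb{R}^p$ with Jacobian $J_i(q_i)\in\mathbb{R}^{p\times n_i}$, and let $x=(x_1^{\rm T},\dots,x_N^{\rm T})^{\rm T}$. A cooperative task is $\sigma=J_\sigma x\in\mathbb{R}^m$ with a constant matrix $J_\sigma\in\mathbb{R}^{m\times Np}$. Let $\sigma_n(\cdot)$ be a twice continuously differentiable nominal path and let the reference be $\sigma_r(t)=\sigma_n(s_r(t))$ for a twice differentiable scalar path parameter $s_r(t)$, so that $\dot\sigma_r=\frac{\partial\sigma_r}{\partial s_r}\dot s_r$ and $\ddot\sigma_r=\frac{\partial^2\sigma_r}{\partial s_r^2}\dot s_r^2+\frac{\partial\sigma_r}{\partial s_r}\ddot s_r$. Assume the joint accelerations of robot $i$ are $$\ddot q_i=J_i^\dagger\Big(\Gamma_i J_\sigma^\dagger\big(\ddot\sigma_r+k_\sigma\dot{\tilde\sigma}+\lambda_\sigma\tilde\sigma\big)-\dot J_i\dot q_i\Big)+\ddot q_{n,i},$$ where $\tilde\sigma=\sigma_r-\sigma$, $k_\sigma,\lambda_\sigma>0$, $\dagger$ denotes the Moore–Penrose pseudoinverse, $\Gamma_i\in\mathbb{R}^{p\times Np}$ is the block-row matrix with identity $I_p$ in the $i$-th block and zero blocks elsewhere, and $\ddot q_{n,i}\in\mathbb{R}^{n_i}$ is an arbitrary vector with $J_i\ddot q_{n,i}=0$ (not depending on $\ddot s_r$). Let the human position $p_o(t)\in\mathbb{R}^3$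 be a given twice differentiable signal. For a point $p\in\mathbb{R}^3$ with velocity $\dot p$, define the safety index $f(p,\dot p,p_o,\dot p_o)=\alpha_1(d)+\alpha_2(d,\dot d)$, where $d=\|p-p_o\|$, $\alpha_1$ is a nonnegative continuous monotonically increasing function of $d$, and $\alpha_2$ is continuous and monotonically increasing in $\dot d$ with $\lim_{\dot d\to+\infty}\alpha_2(d,\dot d)=c\in\mathbb{R}^+$ for all $d$ and $\partial\alpha_2/\partial\dot d\neq 0$ for all $d$ and finite $\dot d$. For robot $i$, the $l$-th link ($l=1,\dots,n_l^i+1$, the last one being a virtual link) is modelled as the segment between points $p^i_{l,0}(q_i)$ and $p^i_{l,1}(q_i)$; set $p^i_{l,r}=p^i_{l,0}+r(p^i_{l,1}-p^i_{l,0})$, $r\in[0,1]$, and define $$F^i=\sum_{l=1}^{n_l^i+1}\int_0^1 f\big(p^i_{l,r},\dot p^i_{l,r},p_o,\dot p_o\big)\,dr .$$ Then the time derivative of $F^i$ is affine in the path-parameter acceleration: there exist scalars $\mu_1^i,\mu_2^i\in\mathbb{R}$, not depending on $\ddot s_r$ (with $\mu_1^i$ depending on $q_i,\dot q_i,p_o,\dot p_o,s_r$ and $\mu_2^i$ additionally on $\ddot p_o,\ddot q_{n,i},\dot s_r$ and the task tracking error), such that $$\dot F^i=\mu_1^i\,\ddot s_r+\mu_2^i .$$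
   Context: Here $\dot d$ denotes the time derivative of the distance $d$. The positional Jacobian of the point $p^i_{l,r}$ is $J^i_{l,r}(q_i)\in\mathbb{R}^{3\times n_i}$, so that $\ddot p^i_{l,r}=J^i_{l,r}\ddot q_i+\dot J^i_{l,r}\dot q_i$. The functions $\alpha_1,\alpha_2$ are taken differentiable and all distances $d=\|p^i_{l,r}-p_o\|$ are assumed nonzero, so that all derivatives involved exist. *)

theory Defs
  imports "HOL-Analysis.Analysis"
begin

definition pinv :: "real^'n^'m \<Rightarrow> real^'m^'n" where
  "pinv A = (THE X. A ** X ** A = A \<and> X ** A ** X = X \<and>
                    transpose (A ** X) = A ** X \<and> transpose (X ** A) = X ** A)"

definition Gamma :: "'N::finite \<Rightarrow> real^('N \<times> 'p::finite)^'p" where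
  "Gamma i = (\<chi> a. \<chi> jb. if fst jb = i \<and> snd jb = a then 1 else 0)"

definition dist_ho :: "real^3 \<Rightarrow> real^3 \<Rightarrow> real" where
  "dist_ho p po = norm (p - po)"

definition dist_rate :: "real^3 \<Rightarrow> real^3 \<Rightarrow> real^3 \<Rightarrow> real^3 \<Rightarrow> real" where
  "dist_rate p pd po pod = ((p - po) \<bullet> (pd - pod)) / norm (p - po)"

definition safety_index ::
  "(real \<Rightarrow> real) \<Rightarrow> (real \<Rightarrow> real \<Rightarrow> real) \<Rightarrow> real^3 \<Rightarrow> real^3 \<Rightarrow> real^3 \<Rightarrow> real^3 \<Rightarrow> real" where
  "safety_index \<alpha>1 \<alpha>2 p pd po pod =
     \<alpha>1 (dist_ho p po) + \<alpha>2 (dist_ho p po) (dist_rate p pd po pod)"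

definition link_point :: "(nat \<Rightarrow> 'q \<Rightarrow> real^3) \<Rightarrow> (nat \<Rightarrow> 'q \<Rightarrow> real^3) \<Rightarrow> nat \<Rightarrow> real \<Rightarrow> 'q \<Rightarrow> real^3" where
  "link_point P0 P1 l r q = P0 l q + r *\<^sub>R (P1 l q - P0 l q)"

definition link_jac :: "(nat \<Rightarrow> 'q \<Rightarrow> real^'n^3) \<Rightarrow> (nat \<Rightarrow> 'q \<Rightarrow> real^'n^3) \<Rightarrow> nat \<Rightarrow> real \<Rightarrow> 'q \<Rightarrow> real^'n^3" where
  "link_jac JP0 JP1 l r q = JP0 l q + r *\<^sub>R (JP1 l q - JP0 l q)"

definition F_index ::
  "(real \<Rightarrow> real) \<Rightarrow> (real \<Rightarrow> real \<Rightarrow> real) \<Rightarrow> nat \<Rightarrow>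
   (nat \<Rightarrow> real^'n \<Rightarrow> real^3) \<Rightarrow> (nat \<Rightarrow> real^'n \<Rightarrow> real^3) \<Rightarrow>
   (nat \<Rightarrow> real^'n \<Rightarrow> real^'n^3) \<Rightarrow> (nat \<Rightarrow> real^'n \<Rightarrow> real^'n^3) \<Rightarrow>
   real^'n \<Rightarrow> real^'n \<Rightarrow> real^3 \<Rightarrow> real^3 \<Rightarrow> real" where
  "F_index \<alpha>1 \<alpha>2 nl P0 P1 JP0 JP1 q qd po pod =
     (\<Sum>l = 1..nl + 1. integral {0..1} (\<lambda>r.
        safety_index \<alpha>1 \<alpha>2 (link_point P0 P1 l r q) (link_jac JP0 JP1 l r q *v qd) po pod))"

end

theory Submission
  imports Defs
begin

(*
  Along a motion, F^i is a function of the state (q, qd, p_o, pd_o) alone. This function is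
  continuously differentiable: on each link the distance to the human is bounded away from zero
  on a neighbourhood of the segment (tube lemma), so the integral over r can be differentiated
  under the integral sign. By the chain rule, the time derivative of F^i is this derivative, a
  linear map, applied to (qd, qdd, pd_o, pdd_o). The control law makes qdd affine in the path
  acceleration, qdd = drift + sdd_r * J_i^+ Gamma_i J_sigma^+ sigma_n'(s_r), and linearity
  turns this into the claimed affine dependence of the derivative of F^i on sdd_r.
*)

lemma bounded_bilinear_matrix_vector_mult [bounded_bilinear]:
  "bounded_bilinear ((*v) :: real^'a^'b \<Rightarrow> real^'a \<Rightarrow> real^'b)"
  unfolding bilinear_conv_bounded_bilinear[symmetric] bilinear_def
  by (auto intro!: linearI simp: algebra_simps vec_eq_iff matrix_vector_mult_def sum_distrib_left sum.distrib)

lemma has_derivative_integral_parametric: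
  fixes f :: "'a::euclidean_space \<Rightarrow> 'b::euclidean_space \<Rightarrow> 'c::banach"
  assumes W: "open W" "{x0} \<times> cbox a b \<subseteq> W"
    and deriv: "\<And>x r. (x, r) \<in> W \<Longrightarrow> ((\<lambda>x. f x r) has_derivative f' x r) (at x)"
    and cont: "continuous_on W (\<lambda>(x, r). f x r)"
    and cont': "\<And>h. continuous_on W (\<lambda>(x, r). f' x r h)"
  shows "((\<lambda>x. integral (cbox a b) (f x)) has_derivative
           (\<lambda>h. integral (cbox a b) (\<lambda>r. f' x0 r h))) (at x0)"
proof -
  \<comment> \<open>\<open>leibniz_rule\<close> needs a convex neighbourhood U of x0 with U \<times> cbox a b \<subseteq> W.\<close>
  obtain X0 where X0: "x0 \<in> X0" "open X0" "X0 \<times> cbox a b \<subseteq> W"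
    using Elementary_Topology.tube_lemma[OF compact_cbox W] by blast
  then obtain e where "e > 0" "ball x0 e \<subseteq> X0"
    by (meson openE)
  define U where "U = ball x0 e"
  have U: "x0 \<in> U" "convex U" "open U" "U \<times> cbox a b \<subseteq> W"
    using \<open>e > 0\<close> \<open>ball x0 e \<subseteq> X0\<close> X0(3) by (auto simp: U_def)
  have apply_Blinfun: "blinfun_apply (Blinfun (f' x r)) = f' x r" if "(x, r) \<in> W" for x r
    using bounded_linear_Blinfun_apply[OF has_derivative_bounded_linear[OF deriv[OF that]]] .
  have cont_Blinfun: "continuous_on (U \<times> cbox a b) (\<lambda>(x, r). Blinfun (f' x r))"
  proof (rule continuous_on_blinfun_componentwise)
    fix h :: 'a
    show "continuous_on (U \<times> cbox a b) (\<lambda>z. blinfun_apply (case z of (x, r) \<Rightarrow> Blinfun (f' x r)) h)"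
      using continuous_on_subset[OF cont' U(4)]
      by (rule continuous_on_eq) (use U(4) apply_Blinfun in auto)
  qed
  have "((\<lambda>x. integral (cbox a b) (f x)) has_derivative
           integral (cbox a b) (\<lambda>r. Blinfun (f' x0 r))) (at x0 within U)"
  proof (rule leibniz_rule[OF _ _ cont_Blinfun U(1,2)])
    fix x r assume "x \<in> U" "r \<in> cbox a b"
    then have "(x, r) \<in> W" using U(4) by blast
    then show "((\<lambda>x. f x r) has_derivative blinfun_apply (Blinfun (f' x r))) (at x within U)"
      by (simp add: apply_Blinfun deriv has_derivative_at_withinI)
  next
    fix x assume "x \<in> U"
    then have "continuous_on (cbox a b) (\<lambda>r. (\<lambda>(x, r). f x r) (x, r))"
      using U(4) by (intro continuous_on_compose2[OF cont]) (auto intro!: continuous_intros)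
    then show "f x integrable_on cbox a b"
      by (simp add: integrable_continuous)
  qed
  moreover have "continuous_on (cbox a b) (\<lambda>r. (\<lambda>(x, r). Blinfun (f' x r)) (x0, r))"
    using U(1) by (intro continuous_on_compose2[OF cont_Blinfun]) (auto intro!: continuous_intros)
  then have "(\<lambda>r. Blinfun (f' x0 r)) integrable_on cbox a b"
    by (simp add: integrable_continuous)
  ultimately show ?thesis
    unfolding at_within_open[OF U(1,3)]
    by (elim has_derivative_eq_rhs)
      (use W(2) in \<open>auto simp: fun_eq_iff blinfun_apply_integral apply_Blinfun intro!: integral_cong\<close>)
qed

definition safety_fun :: "(real \<Rightarrow> real) \<Rightarrow> (real \<Rightarrow> real \<Rightarrow> real) \<Rightarrow> 'v::real_inner \<Rightarrow> 'v \<Rightarrow> real" where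
  "safety_fun \<alpha>1 \<alpha>2 e w = \<alpha>1 (norm e) + \<alpha>2 (norm e) (e \<bullet> w / norm e)"

(* Chain rule for d = |e| and dd = e . w / |e|: their derivatives in direction (de, dw) are
   e . de / |e| and the last factor below. *)
definition safety_fun_deriv ::
  "(real \<Rightarrow> real) \<Rightarrow> (real \<Rightarrow> real \<Rightarrow> real) \<Rightarrow> (real \<Rightarrow> real \<Rightarrow> real) \<Rightarrow>
   'v::real_inner \<Rightarrow> 'v \<Rightarrow> 'v \<Rightarrow> 'v \<Rightarrow> real" where
  "safety_fun_deriv \<alpha>1' D1\<alpha>2 D2\<alpha>2 e w de dw =
     \<alpha>1' (norm e) * (e \<bullet> de / norm e)
     + D1\<alpha>2 (norm e) (e \<bullet> w / norm e) * (e \<bullet> de / norm e)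
     + D2\<alpha>2 (norm e) (e \<bullet> w / norm e) *
         ((de \<bullet> w + e \<bullet> dw) / norm e - (e \<bullet> w) * (e \<bullet> de) / norm e ^ 3)"

lemma safety_index_eq_safety_fun:
  "safety_index \<alpha>1 \<alpha>2 p pd po pod = safety_fun \<alpha>1 \<alpha>2 (p - po) (pd - pod)"
  by (simp add: safety_index_def safety_fun_def dist_ho_def dist_rate_def)

lemma has_derivative_safety_fun:
  fixes E W :: "'a::real_normed_vector \<Rightarrow> 'v::real_inner"
  assumes \<alpha>1: "\<And>d. (\<alpha>1 has_real_derivative \<alpha>1' d) (at d)"
    and \<alpha>2: "\<And>d dd. ((\<lambda>(x, y). \<alpha>2 x y) has_derivative
                        (\<lambda>(h, k). D1\<alpha>2 d dd * h + D2\<alpha>2 d dd * k)) (at (d, dd))"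
    and E: "(E has_derivative DE) (at x)" and W: "(W has_derivative DW) (at x)"
    and nz: "E x \<noteq> 0"
  shows "((\<lambda>x. safety_fun \<alpha>1 \<alpha>2 (E x) (W x)) has_derivative
           (\<lambda>h. safety_fun_deriv \<alpha>1' D1\<alpha>2 D2\<alpha>2 (E x) (W x) (DE h) (DW h))) (at x)"
proof -
  have d: "((\<lambda>x. norm (E x)) has_derivative (\<lambda>h. E x \<bullet> DE h / norm (E x))) (at x)"
    using has_derivative_compose[OF E has_derivative_norm[OF nz]]
    by (simp add: sgn_div_norm inner_commute divide_inverse mult.commute)
  have dd: "((\<lambda>x. E x \<bullet> W x / norm (E x)) has_derivative
      (\<lambda>h. (DE h \<bullet> W x + E x \<bullet> DW h) / norm (E x) - (E x \<bullet> W x) * (E x \<bullet> DE h) / norm (E x) ^ 3)) (at x)"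
    by (rule has_derivative_eq_rhs[OF has_derivative_divide'[OF has_derivative_inner[OF E W] d]])
      (use nz in \<open>auto simp: fun_eq_iff field_simps power3_eq_cube\<close>)
  have "((\<lambda>x. \<alpha>1 (norm (E x))) has_derivative
      (\<lambda>h. \<alpha>1' (norm (E x)) * (E x \<bullet> DE h / norm (E x)))) (at x)"
    using has_derivative_compose[OF d \<alpha>1[unfolded has_field_derivative_def]] by (simp add: mult.commute)
  moreover have "((\<lambda>x. \<alpha>2 (norm (E x)) (E x \<bullet> W x / norm (E x))) has_derivative
      (\<lambda>h. D1\<alpha>2 (norm (E x)) (E x \<bullet> W x / norm (E x)) * (E x \<bullet> DE h / norm (E x))
         + D2\<alpha>2 (norm (E x)) (E x \<bullet> W x / norm (E x)) *
           ((DE h \<bullet> W x + E x \<bullet> DW h) / norm (E x) - (E x \<bullet> W x) * (E x \<bullet> DE h) / norm (E x) ^ 3))) (at x)"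
    using has_derivative_compose[OF has_derivative_Pair[OF d dd] \<alpha>2] by simp
  ultimately show ?thesis
    unfolding safety_fun_def safety_fun_deriv_def
    by (rule has_derivative_eq_rhs[OF has_derivative_add]) (simp add: fun_eq_iff algebra_simps)
qed

lemma continuous_on_safety_fun:
  assumes "continuous_on UNIV \<alpha>1" "continuous_on UNIV (\<lambda>(d, dd). \<alpha>2 d dd)"
    and "continuous_on S e" "continuous_on S w" "\<And>z. z \<in> S \<Longrightarrow> e z \<noteq> 0"
  shows "continuous_on S (\<lambda>z. safety_fun \<alpha>1 \<alpha>2 (e z) (w z))"
proof -
  have "continuous_on S (\<lambda>z. (norm (e z), e z \<bullet> w z / norm (e z)))"
    using assms(3-5) by (intro continuous_intros) auto
  from continuous_on_compose2[OF assms(2) this]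
    continuous_on_compose2[OF assms(1) continuous_on_norm[OF assms(3)]]
  show ?thesis
    unfolding safety_fun_def by (auto intro: continuous_on_add)
qed

lemma continuous_on_safety_fun_deriv:
  assumes "continuous_on UNIV \<alpha>1'"
    and "continuous_on UNIV (\<lambda>(d, dd). D1\<alpha>2 d dd)" "continuous_on UNIV (\<lambda>(d, dd). D2\<alpha>2 d dd)"
    and "continuous_on S e" "continuous_on S w" "continuous_on S de" "continuous_on S dw"
    and "\<And>z. z \<in> S \<Longrightarrow> e z \<noteq> 0"
  shows "continuous_on S (\<lambda>z. safety_fun_deriv \<alpha>1' D1\<alpha>2 D2\<alpha>2 (e z) (w z) (de z) (dw z))"
proof -
  have "continuous_on S (\<lambda>z. (norm (e z), e z \<bullet> w z / norm (e z)))"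
    using assms(4,5,8) by (intro continuous_intros) auto
  from continuous_on_compose2[OF assms(2) this] continuous_on_compose2[OF assms(3) this]
    continuous_on_compose2[OF assms(1) continuous_on_norm[OF assms(4)]]
  show ?thesis
    unfolding safety_fun_deriv_def using assms(4-8) by (auto intro!: continuous_intros)
qed

lemma vector_derivative_chain_frechet:
  assumes "f differentiable (at (g t))" and "(g has_vector_derivative g') (at t)"
  shows "vector_derivative (\<lambda>\<tau>. f (g \<tau>)) (at t) = frechet_derivative f (at (g t)) g'"
proof -
  have "(f has_derivative frechet_derivative f (at (g t))) (at (g t))"
    using assms(1) frechet_derivative_works by blast
  from vector_derivative_diff_chain_within[OF assms(2) has_derivative_at_withinI[OF this]]
  show ?thesis
    by (simp add: o_def vector_derivative_at)
qed

type_synonym 'n motion_state = "(real^'n) \<times> (real^'n) \<times> (real^3) \<times> (real^3)"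

locale smooth_safety_links =
  fixes \<alpha>1 \<alpha>1' :: "real \<Rightarrow> real"
    and \<alpha>2 D1\<alpha>2 D2\<alpha>2 :: "real \<Rightarrow> real \<Rightarrow> real"
    and P0 P1 :: "nat \<Rightarrow> real^'n \<Rightarrow> real^3"
    and JP0 JP1 :: "nat \<Rightarrow> real^'n \<Rightarrow> real^'n^3"
    and DJP0 DJP1 :: "nat \<Rightarrow> real^'n \<Rightarrow> ((real^'n) \<Rightarrow>\<^sub>L (real^'n^3))"
  assumes \<alpha>1_deriv: "\<And>d. (\<alpha>1 has_real_derivative \<alpha>1' d) (at d)"
    and \<alpha>1'_cont: "continuous_on UNIV \<alpha>1'"
    and \<alpha>2_deriv: "\<And>d dd. ((\<lambda>(x, y). \<alpha>2 x y) has_derivative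
                          (\<lambda>(h, k). D1\<alpha>2 d dd * h + D2\<alpha>2 d dd * k)) (at (d, dd))"
    and D1\<alpha>2_cont: "continuous_on UNIV (\<lambda>(d, dd). D1\<alpha>2 d dd)"
    and D2\<alpha>2_cont: "continuous_on UNIV (\<lambda>(d, dd). D2\<alpha>2 d dd)"
    and P0_jac: "\<And>l q. (P0 l has_derivative (\<lambda>h. JP0 l q *v h)) (at q)"
    and P1_jac: "\<And>l q. (P1 l has_derivative (\<lambda>h. JP1 l q *v h)) (at q)"
    and JP0_deriv: "\<And>l q. (JP0 l has_derivative blinfun_apply (DJP0 l q)) (at q)"
    and DJP0_cont: "\<And>l. continuous_on UNIV (DJP0 l)"
    and JP1_deriv: "\<And>l q. (JP1 l has_derivative blinfun_apply (DJP1 l q)) (at q)"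
    and DJP1_cont: "\<And>l. continuous_on UNIV (DJP1 l)"
begin

lemma continuous_on_\<alpha>: "continuous_on UNIV \<alpha>1" "continuous_on UNIV (\<lambda>(d, dd). \<alpha>2 d dd)"
  using DERIV_isCont[OF \<alpha>1_deriv] has_derivative_continuous[OF \<alpha>2_deriv]
  by (auto intro!: continuous_at_imp_continuous_on)

lemma continuous_on_links [continuous_intros]:
  assumes "continuous_on S f"
  shows "continuous_on S (\<lambda>z. P0 l (f z))" "continuous_on S (\<lambda>z. P1 l (f z))"
    "continuous_on S (\<lambda>z. JP0 l (f z))" "continuous_on S (\<lambda>z. JP1 l (f z))"
    "continuous_on S (\<lambda>z. DJP0 l (f z))" "continuous_on S (\<lambda>z. DJP1 l (f z))"
proof -
  have "continuous_on UNIV (P0 l)" "continuous_on UNIV (P1 l)"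
    "continuous_on UNIV (JP0 l)" "continuous_on UNIV (JP1 l)"
    using has_derivative_continuous[OF P0_jac] has_derivative_continuous[OF P1_jac]
      has_derivative_continuous[OF JP0_deriv] has_derivative_continuous[OF JP1_deriv]
    by (simp_all add: continuous_at_imp_continuous_on)
  with DJP0_cont DJP1_cont
  show "continuous_on S (\<lambda>z. P0 l (f z))" "continuous_on S (\<lambda>z. P1 l (f z))"
    "continuous_on S (\<lambda>z. JP0 l (f z))" "continuous_on S (\<lambda>z. JP1 l (f z))"
    "continuous_on S (\<lambda>z. DJP0 l (f z))" "continuous_on S (\<lambda>z. DJP1 l (f z))"
    by (auto intro: continuous_on_compose2[OF _ assms])
qed

definition rel_pos :: "nat \<Rightarrow> real \<Rightarrow> 'n motion_state \<Rightarrow> real^3" where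
  "rel_pos l r = (\<lambda>(q, qd, po, pod). link_point P0 P1 l r q - po)"

definition rel_vel :: "nat \<Rightarrow> real \<Rightarrow> 'n motion_state \<Rightarrow> real^3" where
  "rel_vel l r = (\<lambda>(q, qd, po, pod). link_jac JP0 JP1 l r q *v qd - pod)"

definition rel_pos_deriv :: "nat \<Rightarrow> real \<Rightarrow> 'n motion_state \<Rightarrow> 'n motion_state \<Rightarrow> real^3" where
  "rel_pos_deriv l r = (\<lambda>(q, qd, po, pod) (hq, hqd, hpo, hpod). link_jac JP0 JP1 l r q *v hq - hpo)"

definition rel_vel_deriv :: "nat \<Rightarrow> real \<Rightarrow> 'n motion_state \<Rightarrow> 'n motion_state \<Rightarrow> real^3" where
  "rel_vel_deriv l r = (\<lambda>(q, qd, po, pod) (hq, hqd, hpo, hpod).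
     (DJP0 l q hq + r *\<^sub>R (DJP1 l q hq - DJP0 l q hq)) *v qd + link_jac JP0 JP1 l r q *v hqd - hpod)"

lemma has_derivative_rel_pos: "(rel_pos l r has_derivative rel_pos_deriv l r x) (at x)"
  unfolding rel_pos_def rel_pos_deriv_def link_point_def link_jac_def case_prod_unfold
  by (rule has_derivative_eq_rhs, (rule derivative_intros has_derivative_compose[OF _ P0_jac]
        has_derivative_compose[OF _ P1_jac])+)
    (simp add: fun_eq_iff algebra_simps scaleR_matrix_vector_assoc[symmetric])

lemma has_derivative_rel_vel: "(rel_vel l r has_derivative rel_vel_deriv l r x) (at x)"
  unfolding rel_vel_def rel_vel_deriv_def link_jac_def case_prod_unfold
  by (rule has_derivative_eq_rhs, (rule derivative_intros has_derivative_compose[OF _ JP0_deriv]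
        has_derivative_compose[OF _ JP1_deriv])+)
    (simp add: fun_eq_iff algebra_simps scaleR_matrix_vector_assoc[symmetric])

lemma continuous_on_rel_pos_vel [continuous_intros]:
  assumes "continuous_on S f" "continuous_on S g"
  shows "continuous_on S (\<lambda>z. rel_pos l (g z) (f z))"
    "continuous_on S (\<lambda>z. rel_vel l (g z) (f z))"
    "continuous_on S (\<lambda>z. rel_pos_deriv l (g z) (f z) h)"
    "continuous_on S (\<lambda>z. rel_vel_deriv l (g z) (f z) h)"
  unfolding rel_pos_def rel_vel_def rel_pos_deriv_def rel_vel_deriv_def link_point_def link_jac_def
    case_prod_unfold
  by (intro continuous_intros assms)+

definition link_safety_deriv :: "nat \<Rightarrow> real \<Rightarrow> 'n motion_state \<Rightarrow> 'n motion_state \<Rightarrow> real" where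
  "link_safety_deriv l r x h = safety_fun_deriv \<alpha>1' D1\<alpha>2 D2\<alpha>2
     (rel_pos l r x) (rel_vel l r x) (rel_pos_deriv l r x h) (rel_vel_deriv l r x h)"

definition F_index_deriv :: "nat \<Rightarrow> 'n motion_state \<Rightarrow> 'n motion_state \<Rightarrow> real" where
  "F_index_deriv nl x h = (\<Sum>l = 1..nl + 1. integral {0..1} (\<lambda>r. link_safety_deriv l r x h))"

lemma F_index_eq_integral_safety_fun:
  "(\<lambda>(q, qd, po, pod). F_index \<alpha>1 \<alpha>2 nl P0 P1 JP0 JP1 q qd po pod) =
     (\<lambda>x. \<Sum>l = 1..nl + 1. integral {0..1} (\<lambda>r. safety_fun \<alpha>1 \<alpha>2 (rel_pos l r x) (rel_vel l r x)))"
  by (auto simp: fun_eq_iff F_index_def safety_index_eq_safety_fun rel_pos_def rel_vel_def)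

lemma has_derivative_link_integral:
  assumes "\<And>r. r \<in> {0..1} \<Longrightarrow> rel_pos l r x0 \<noteq> 0"
  shows "((\<lambda>x. integral {0..1} (\<lambda>r. safety_fun \<alpha>1 \<alpha>2 (rel_pos l r x) (rel_vel l r x)))
           has_derivative (\<lambda>h. integral {0..1} (\<lambda>r. link_safety_deriv l r x0 h))) (at x0)"
  unfolding cbox_interval[symmetric]
proof (rule has_derivative_integral_parametric)
  let ?W = "{z. rel_pos l (snd z) (fst z) \<noteq> 0}"
  show "open ?W"
    by (intro open_Collect_neq continuous_intros)
  show "{x0} \<times> cbox 0 1 \<subseteq> ?W"
    using assms by (auto simp: cbox_interval)
  show "((\<lambda>x. safety_fun \<alpha>1 \<alpha>2 (rel_pos l r x) (rel_vel l r x))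
           has_derivative link_safety_deriv l r x) (at x)" if "(x, r) \<in> ?W" for x r
    unfolding link_safety_deriv_def using that
    by (intro has_derivative_safety_fun \<alpha>1_deriv \<alpha>2_deriv has_derivative_rel_pos has_derivative_rel_vel)
      simp
  show "continuous_on ?W (\<lambda>(x, r). safety_fun \<alpha>1 \<alpha>2 (rel_pos l r x) (rel_vel l r x))"
    unfolding case_prod_unfold
    by (intro continuous_on_safety_fun continuous_on_\<alpha> continuous_intros) auto
  show "continuous_on ?W (\<lambda>(x, r). link_safety_deriv l r x h)" for h
    unfolding case_prod_unfold link_safety_deriv_def
    by (intro continuous_on_safety_fun_deriv \<alpha>1'_cont D1\<alpha>2_cont D2\<alpha>2_cont continuous_intros) auto
qed

lemma has_derivative_F_index:
  assumes "\<And>l r. l \<in> {1..nl + 1} \<Longrightarrow> r \<in> {0..1} \<Longrightarrow> link_point P0 P1 l r q \<noteq> po"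
  shows "((\<lambda>(q, qd, po, pod). F_index \<alpha>1 \<alpha>2 nl P0 P1 JP0 JP1 q qd po pod)
           has_derivative F_index_deriv nl (q, qd, po, pod)) (at (q, qd, po, pod))"
  unfolding F_index_eq_integral_safety_fun F_index_deriv_def
  using assms
  by (intro has_derivative_sum has_derivative_link_integral) (auto simp: rel_pos_def)

lemma has_real_derivative_F_index_affine:
  assumes q: "(q has_vector_derivative qd t) (at t)"
    and qd: "(qd has_vector_derivative u + c *\<^sub>R v) (at t)"
    and po: "(po has_vector_derivative pod t) (at t)"
    and pod: "(pod has_vector_derivative podd) (at t)"
    and no_contact:
      "\<And>l r. l \<in> {1..nl + 1} \<Longrightarrow> r \<in> {0..1} \<Longrightarrow> link_point P0 P1 l r (q t) \<noteq> po t"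
  shows "((\<lambda>\<tau>. F_index \<alpha>1 \<alpha>2 nl P0 P1 JP0 JP1 (q \<tau>) (qd \<tau>) (po \<tau>) (pod \<tau>))
           has_real_derivative
           F_index_deriv nl (q t, qd t, po t, pod t) (0, v, 0, 0) * c
           + F_index_deriv nl (q t, qd t, po t, pod t) (qd t, u, pod t, podd)) (at t)"
proof -
  let ?DF = "F_index_deriv nl (q t, qd t, po t, pod t)"
  have F: "((\<lambda>(q, qd, po, pod). F_index \<alpha>1 \<alpha>2 nl P0 P1 JP0 JP1 q qd po pod) has_derivative ?DF)
      (at (q t, qd t, po t, pod t))"
    using no_contact by (rule has_derivative_F_index)
  have lin: "linear ?DF"
    by (rule has_derivative_linear[OF F])
  have \<gamma>: "((\<lambda>\<tau>. (q \<tau>, qd \<tau>, po \<tau>, pod \<tau>)) has_vector_derivative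
      (qd t, u, pod t, podd) + c *\<^sub>R (0, v, 0, 0)) (at t)"
    using q qd po pod by (auto intro!: has_vector_derivative_Pair)
  from vector_derivative_diff_chain_within[OF \<gamma> has_derivative_at_withinI[OF F]]
  have "((\<lambda>\<tau>. F_index \<alpha>1 \<alpha>2 nl P0 P1 JP0 JP1 (q \<tau>) (qd \<tau>) (po \<tau>) (pod \<tau>))
      has_vector_derivative ?DF (qd t, u, pod t, podd) + c * ?DF (0, v, 0, 0)) (at t)"
    by (simp only: o_def prod.case linear_add[OF lin] linear_scale[OF lin] real_scaleR_def)
  then show ?thesis
    by (simp add: has_real_derivative_iff_has_vector_derivative algebra_simps)
qed

end

theorem lemma1:
  fixes i :: "'N::finite"
    and kin :: "real^'n \<Rightarrow> real^'p"
    and J :: "real^'n \<Rightarrow> real^'n^'p"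
    and J\<sigma> :: "real^('N \<times> 'p)^'m"
    and \<sigma>n \<sigma>n1 \<sigma>n2 :: "real \<Rightarrow> real^'m"
    and k\<sigma> l\<sigma> :: real
    and \<alpha>1 \<alpha>1' :: "real \<Rightarrow> real"
    and \<alpha>2 D1\<alpha>2 D2\<alpha>2 :: "real \<Rightarrow> real \<Rightarrow> real"
    and c :: real
    and nl :: nat
    and P0 P1 :: "nat \<Rightarrow> real^'n \<Rightarrow> real^3"
    and JP0 JP1 :: "nat \<Rightarrow> real^'n \<Rightarrow> real^'n^3"
    and DJP0 DJP1 :: "nat \<Rightarrow> real^'n \<Rightarrow> ((real^'n) \<Rightarrow>\<^sub>L (real^'n^3))"
  assumes kin_jac: "\<And>q. (kin has_derivative (\<lambda>h. J q *v h)) (at q)"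
    and J_diff: "\<And>q. J differentiable (at q)"
    and \<sigma>n_d1: "\<And>s. (\<sigma>n has_vector_derivative \<sigma>n1 s) (at s)"
    and \<sigma>n_d2: "\<And>s. (\<sigma>n1 has_vector_derivative \<sigma>n2 s) (at s)"
    and \<sigma>n_C2: "continuous_on UNIV \<sigma>n2"
    and k\<sigma>_pos: "k\<sigma> > 0" and l\<sigma>_pos: "l\<sigma> > 0"
    and \<alpha>1_nonneg: "\<And>d. \<alpha>1 d \<ge> 0"
    and \<alpha>1_cont: "continuous_on UNIV \<alpha>1"
    and \<alpha>1_mono: "mono \<alpha>1"
    and \<alpha>1_C1: "\<And>d. (\<alpha>1 has_real_derivative \<alpha>1' d) (at d)" "continuous_on UNIV \<alpha>1'"
    and \<alpha>2_cont: "continuous_on UNIV (\<lambda>(d, dd). \<alpha>2 d dd)"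
    and \<alpha>2_mono: "\<And>d. mono (\<alpha>2 d)"
    and c_pos: "c > 0"
    and \<alpha>2_lim: "\<And>d. (\<alpha>2 d \<longlongrightarrow> c) at_top"
    and \<alpha>2_C1: "\<And>d dd. ((\<lambda>(x, y). \<alpha>2 x y) has_derivative
                          (\<lambda>(h, k). D1\<alpha>2 d dd * h + D2\<alpha>2 d dd * k)) (at (d, dd))"
                "continuous_on UNIV (\<lambda>(d, dd). D1\<alpha>2 d dd)"
                "continuous_on UNIV (\<lambda>(d, dd). D2\<alpha>2 d dd)"
    and \<alpha>2_partial_nz: "\<And>d dd. D2\<alpha>2 d dd \<noteq> 0"
    and P0_jac: "\<And>l q. (P0 l has_derivative (\<lambda>h. JP0 l q *v h)) (at q)"
    and P1_jac: "\<And>l q. (P1 l has_derivative (\<lambda>h. JP1 l q *v h)) (at q)"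
    and JP0_C1: "\<And>l q. (JP0 l has_derivative blinfun_apply (DJP0 l q)) (at q)"
                "\<And>l. continuous_on UNIV (DJP0 l)"
    and JP1_C1: "\<And>l q. (JP1 l has_derivative blinfun_apply (DJP1 l q)) (at q)"
                "\<And>l. continuous_on UNIV (DJP1 l)"
  shows "\<exists>(\<mu>1 :: real^'n \<Rightarrow> real^'n \<Rightarrow> real^3 \<Rightarrow> real^3 \<Rightarrow> real \<Rightarrow> real)
          (\<mu>2 :: real^'n \<Rightarrow> real^'n \<Rightarrow> real^3 \<Rightarrow> real^3 \<Rightarrow> real^3 \<Rightarrow> real^'n \<Rightarrow>
                 real \<Rightarrow> real \<Rightarrow> real^'m \<Rightarrow> real^'m \<Rightarrow> real).
     \<forall>(q :: real \<Rightarrow> real^'n) qd qdd (qn :: real \<Rightarrow> real^'n)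
       (s :: real \<Rightarrow> real) sd sdd (po :: real \<Rightarrow> real^3) pod podd
       (X :: real \<Rightarrow> real^('N \<times> 'p)) Xd.
       (\<forall>t. (q has_vector_derivative qd t) (at t)) \<and>
       (\<forall>t. (qd has_vector_derivative qdd t) (at t)) \<and>
       (\<forall>t. (s has_real_derivative sd t) (at t)) \<and>
       (\<forall>t. (sd has_real_derivative sdd t) (at t)) \<and>
       (\<forall>t. (po has_vector_derivative pod t) (at t)) \<and>
       (\<forall>t. (pod has_vector_derivative podd t) (at t)) \<and>
       (\<forall>t. (X has_vector_derivative Xd t) (at t)) \<and>
       (\<forall>t a. X t $ (i, a) = kin (q t) $ a) \<and>
       (\<forall>t. J (q t) *v qn t = 0) \<and>
       (\<forall>t. qdd t =
           pinv (J (q t)) *v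
             (Gamma i *v (pinv J\<sigma> *v
                ((sd t)\<^sup>2 *\<^sub>R \<sigma>n2 (s t) + sdd t *\<^sub>R \<sigma>n1 (s t)
                 + k\<sigma> *\<^sub>R (sd t *\<^sub>R \<sigma>n1 (s t) - J\<sigma> *v Xd t)
                 + l\<sigma> *\<^sub>R (\<sigma>n (s t) - J\<sigma> *v X t)))
              - vector_derivative (\<lambda>\<tau>. J (q \<tau>)) (at t) *v qd t)
           + qn t) \<and>
       (\<forall>t l r. l \<in> {1..nl + 1} \<longrightarrow> r \<in> {0..1} \<longrightarrow> link_point P0 P1 l r (q t) \<noteq> po t)
       \<longrightarrow>
       (\<forall>t. ((\<lambda>\<tau>. F_index \<alpha>1 \<alpha>2 nl P0 P1 JP0 JP1 (q \<tau>) (qd \<tau>) (po \<tau>) (pod \<tau>))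
              has_real_derivative
                (\<mu>1 (q t) (qd t) (po t) (pod t) (s t) * sdd t
                 + \<mu>2 (q t) (qd t) (po t) (pod t) (podd t) (qn t) (s t) (sd t)
                      (\<sigma>n (s t) - J\<sigma> *v X t) (sd t *\<^sub>R \<sigma>n1 (s t) - J\<sigma> *v Xd t))) (at t))"
proof -
  \<comment> \<open>Only the smoothness of \<alpha>1, \<alpha>2 and of the links enters.\<close>
  interpret smooth_safety_links \<alpha>1 \<alpha>1' \<alpha>2 D1\<alpha>2 D2\<alpha>2 P0 P1 JP0 JP1 DJP0 DJP1
    by unfold_locales (fact \<alpha>1_C1 \<alpha>2_C1 P0_jac P1_jac JP0_C1 JP1_C1)+
  define gain where "gain Q S = pinv (J Q) *v (Gamma i *v (pinv J\<sigma> *v \<sigma>n1 S))" for Q S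
  define drift where "drift Q Qd Qn S Sd E Ed = pinv (J Q) *v (Gamma i *v (pinv J\<sigma> *v
      (Sd\<^sup>2 *\<^sub>R \<sigma>n2 S + k\<sigma> *\<^sub>R Ed + l\<sigma> *\<^sub>R E)) - frechet_derivative J (at Q) Qd *v Qd) + Qn"
    for Q Qd Qn S Sd E Ed
  have control_law_split: "pinv M *v (G *v (pinv J\<sigma> *v (a + c *\<^sub>R b + k + l)) - D) + n
      = pinv M *v (G *v (pinv J\<sigma> *v (a + k + l)) - D) + n + c *\<^sub>R (pinv M *v (G *v (pinv J\<sigma> *v b)))"
    for M :: "real^'n^'p" and G :: "real^('N \<times> 'p)^'p" and a b k l D n and c :: real
    by (simp add: algebra_simps)
  show ?thesis
    apply (rule exI[of _ "\<lambda>Q Qd Po Pod S. F_index_deriv nl (Q, Qd, Po, Pod) (0, gain Q S, 0, 0)"])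
    apply (rule exI[of _ "\<lambda>Q Qd Po Pod Podd Qn S Sd E Ed.
                            F_index_deriv nl (Q, Qd, Po, Pod) (Qd, drift Q Qd Qn S Sd E Ed, Pod, Podd)"])
    apply (intro allI impI, elim conjE)
    apply (rule has_real_derivative_F_index_affine)
        apply blast
       apply (rule has_vector_derivative_eq_rhs, blast)
      subgoal for q qd qdd qn s sd sdd po pod podd X Xd t
        using vector_derivative_chain_frechet[OF J_diff, of q "qd t" t]
        by (simp add: gain_def drift_def control_law_split)
      apply blast+
    done
qed

end
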